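(* Let $N\ge3$ and let $\psi$ be a positive (on $(0,\infty)$) $C^2$ function on $[0,\infty)$ with $\psi(0)=\psi''(0)=0$, $\psi'(0)=1$. Let $\tilde\Phi(r):=\left(\frac{r}{\psi(r)}\right)^{\frac{N-1}{2}}r^{\frac{2-N}{2}}$ for $r>0$. If $(N-2)\psi'(r)+(N-1)r\psi''(r)\ge0$ for all $r>0$, then $\tilde\Phi$ is non-increasing on $(0,\infty)$. *)

theory Defs
  imports "HOL-Analysis.Analysis"
begin

end

theory Submission
  imports Defs
begin

text \<open>
  Taking logarithms, \<open>\<Phi>\<close> is non-increasing iff \<open>\<psi> r \<le> (N - 1) r \<psi>' r\<close> for \<open>r > 0\<close>.
  The function \<open>g r = (N - 1) r \<psi>' r - \<psi> r\<close> vanishes at \<open>0\<close> and has derivative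
  \<open>(N - 2) \<psi>' r + (N - 1) r \<psi>'' r \<ge> 0\<close>, so it is non-negative.
\<close>

lemma DERIV_within_nonneg_imp_increasing_halfline:
  fixes f f' :: "real \<Rightarrow> real"
  assumes deriv: "\<And>r. r \<ge> 0 \<Longrightarrow> (f has_real_derivative f' r) (at r within {0..})"
    and nonneg: "\<And>r. r > 0 \<Longrightarrow> f' r \<ge> 0"
    and "0 \<le> a" "a \<le> b"
  shows "f a \<le> f b"
proof (rule DERIV_nonneg_imp_increasing_open[of a b f])
  fix x assume x: "a < x" "x < b"
  then have "at x within {0..} = at x"
    using \<open>0 \<le> a\<close> by (intro at_within_interior) simp
  then show "\<exists>y. DERIV f x :> y \<and> y \<ge> 0"
    using deriv[of x] nonneg[of x] x \<open>0 \<le> a\<close> by auto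
next
  show "continuous_on {a..b} f"
    by (rule DERIV_continuous_on, rule has_field_derivative_subset[OF deriv])
      (use \<open>0 \<le> a\<close> in auto)
qed (fact \<open>a \<le> b\<close>)

lemma le_scaled_derivative_if_Euler_nonneg:
  fixes \<psi> \<psi>' \<psi>'' :: "real \<Rightarrow> real" and c :: real
  assumes d1: "\<And>r. r \<ge> 0 \<Longrightarrow> (\<psi> has_real_derivative \<psi>' r) (at r within {0..})"
    and d2: "\<And>r. r \<ge> 0 \<Longrightarrow> (\<psi>' has_real_derivative \<psi>'' r) (at r within {0..})"
    and "\<psi> 0 = 0"
    and Euler: "\<And>r. r > 0 \<Longrightarrow> (c - 1) * \<psi>' r + c * r * \<psi>'' r \<ge> 0"
    and "r \<ge> 0"
  shows "\<psi> r \<le> c * r * \<psi>' r"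
proof -
  define g where "g r = c * r * \<psi>' r - \<psi> r" for r
  have g_deriv: "(g has_real_derivative (c - 1) * \<psi>' r + c * r * \<psi>'' r) (at r within {0..})"
    if "r \<ge> 0" for r
    unfolding g_def[abs_def] using that
    by (auto intro!: derivative_eq_intros d1 d2 simp: algebra_simps)
  have "g 0 \<le> g r"
    using Euler \<open>r \<ge> 0\<close> by (intro DERIV_within_nonneg_imp_increasing_halfline[OF g_deriv]) auto
  then show ?thesis
    using \<open>\<psi> 0 = 0\<close> by (simp add: g_def)
qed

lemma antimono_on_ratio_powr:
  fixes \<psi> \<psi>' :: "real \<Rightarrow> real" and a b :: real
  assumes deriv: "\<And>r. r > 0 \<Longrightarrow> (\<psi> has_real_derivative \<psi>' r) (at r)"
    and pos: "\<And>r. r > 0 \<Longrightarrow> \<psi> r > 0"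
    and bound: "\<And>r. r > 0 \<Longrightarrow> (a + b) * \<psi> r \<le> a * r * \<psi>' r"
  shows "antimono_on {0<..} (\<lambda>r. (r / \<psi> r) powr a * r powr b)"
proof (rule monotone_onI)
  define h where "h r = a * (ln r - ln (\<psi> r)) + b * ln r" for r
  define h' where "h' r = ((a + b) * \<psi> r - a * r * \<psi>' r) / (r * \<psi> r)" for r
  have h_deriv: "(h has_real_derivative h' r) (at r)" if "r > 0" for r
    unfolding h_def[abs_def] h'_def using that pos[OF that]
    by (auto intro!: derivative_eq_intros deriv simp: field_simps)
  have h'_nonpos: "h' r \<le> 0" if "r > 0" for r
    unfolding h'_def using bound[OF that] pos[OF that] that
    by (intro divide_nonpos_pos) auto
  fix r s :: real assume rs: "r \<in> {0<..}" "s \<in> {0<..}" "r \<le> s"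
  have "h s \<le> h r"
    using rs by (intro deriv_nonpos_imp_antimono[of r s h h'] h_deriv h'_nonpos) auto
  moreover have "(x / \<psi> x) powr a * x powr b = exp (h x)" if "x > 0" for x
    using that pos[OF that]
    by (simp add: powr_def h_def ln_div exp_add[symmetric] algebra_simps)
  ultimately show "(r / \<psi> r) powr a * r powr b \<ge> (s / \<psi> s) powr a * s powr b"
    using rs by simp
qed

text \<open>
  Only the first-order consequence \<open>\<psi> r \<le> (N - 1) r \<psi>' r\<close> of the hypotheses matters.
\<close>

theorem lemma4p4:
  fixes N :: nat and \<psi> \<psi>' \<psi>'' :: "real \<Rightarrow> real"
  assumes N: "N \<ge> 3"
    and d1: "\<And>r. r \<ge> 0 \<Longrightarrow> (\<psi> has_real_derivative \<psi>' r) (at r within {0..})"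
    and d2: "\<And>r. r \<ge> 0 \<Longrightarrow> (\<psi>' has_real_derivative \<psi>'' r) (at r within {0..})"
    and c2: "continuous_on {0..} \<psi>''"
    and pos: "\<And>r. r > 0 \<Longrightarrow> \<psi> r > 0"
    and init: "\<psi> 0 = 0" "\<psi>'' 0 = 0" "\<psi>' 0 = 1"
    and cond: "\<And>r. r > 0 \<Longrightarrow> (real N - 2) * \<psi>' r + (real N - 1) * r * \<psi>'' r \<ge> 0"
  shows "antimono_on {0<..} (\<lambda>r. (r / \<psi> r) powr ((real N - 1) / 2) * r powr ((2 - real N) / 2))"
proof (rule antimono_on_ratio_powr)
  fix r :: real assume "r > 0"
  then have "at r within {0..} = at r"
    by (intro at_within_interior) simp
  then show "(\<psi> has_real_derivative \<psi>' r) (at r)"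
    using d1[of r] \<open>r > 0\<close> by simp
  show "\<psi> r > 0" using pos \<open>r > 0\<close> .
  have "(real N - 1 - 1) * \<psi>' t + (real N - 1) * t * \<psi>'' t \<ge> 0" if "t > 0" for t
    using cond[OF that] by simp
  then have "\<psi> r \<le> (real N - 1) * r * \<psi>' r"
    using \<open>r > 0\<close> by (intro le_scaled_derivative_if_Euler_nonneg[OF d1 d2 \<open>\<psi> 0 = 0\<close>]) auto
  then show "((real N - 1) / 2 + (2 - real N) / 2) * \<psi> r \<le> (real N - 1) / 2 * r * \<psi>' r"
    by (simp add: field_simps)
qed

end
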